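(* Let $G=(V,E)$ be a simple graph with $n$ vertices. Then, as polynomials in $\lambda$, $$P(\mathcal{H}_{\bullet G},\lambda)=\lambda(\lambda-1)^n\, I\!\left(G,\tfrac{1}{\lambda-1}\right).$$
   Context: A hypergraph $\mathcal{H}=(\mathcal{V},\mathcal{E})$ consists of a finite vertex set $\mathcal{V}$ and a set $\mathcal{E}$ of subsets of $\mathcal{V}$, each of size at least $1$, called edges. For a positive integer $\lambda$, a weak proper $\lambda$-colouring of $\mathcal{H}$ is a map $\phi:\mathcal{V}\to\{1,\dots,\lambda\}$ such that $|\{\phi(v):v\in e\}|>1$ for every $e\in\mathcal{E}$. $P(\mathcal{H},\lambda)$ denotes the number of weak proper $\lambda$-colourings of $\mathcal{H}$; it is a polynomial in $\lambda$ of degree $|\mathcal{V}|$ (the chromatic polynomial of $\mathcal{H}$), and is regarded as a polynomial for all real or complex $\lambda$. For a simple graph $G=(V,E)$, $\mathcal{H}_{\bullet G}$ is the hypergraph with vertex set $V\cup\{w\}$, where $w\notin V$ is a new vertex, and edge set $\{\{u,v,w\}: uv\in E\}$. The independence polynomial of $G$ is $I(G,x)=\sum_A x^{|A|}$, the sum over all independent sets $A$ of $G$ (including the empty set). *)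

theory Defs
  imports "HOL-Library.FuncSet" "HOL-Computational_Algebra.Polynomial"
begin

type_synonym 'v hypergraph = "'v set \<times> 'v set set"

definition is_hypergraph :: "'v hypergraph \<Rightarrow> bool" where
  "is_hypergraph H \<longleftrightarrow> finite (fst H) \<and>
     (\<forall>e\<in>snd H. e \<subseteq> fst H \<and> card e \<ge> 1)"

definition weak_proper_colourings :: "'v hypergraph \<Rightarrow> nat \<Rightarrow> ('v \<Rightarrow> nat) set" where
  "weak_proper_colourings H k =
     {\<phi> \<in> fst H \<rightarrow>\<^sub>E {1..k}. \<forall>e\<in>snd H. card (\<phi> ` e) > 1}"

definition num_colourings :: "'v hypergraph \<Rightarrow> nat \<Rightarrow> nat" where
  "num_colourings H k = card (weak_proper_colourings H k)"

definition chrom_poly :: "'v hypergraph \<Rightarrow> complex poly" where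
  "chrom_poly H = (THE p. \<forall>k::nat. poly p (of_nat k) = of_nat (num_colourings H k))"

definition simple_graph :: "'a set \<Rightarrow> 'a set set \<Rightarrow> bool" where
  "simple_graph V E \<longleftrightarrow> finite V \<and> (\<forall>e\<in>E. e \<subseteq> V \<and> card e = 2)"

definition independent_sets :: "'a set \<Rightarrow> 'a set set \<Rightarrow> 'a set set" where
  "independent_sets V E = {A. A \<subseteq> V \<and> (\<forall>u\<in>A. \<forall>v\<in>A. {u, v} \<notin> E)}"

definition indep_poly :: "'a set \<Rightarrow> 'a set set \<Rightarrow> 'b::comm_ring_1 \<Rightarrow> 'b" where
  "indep_poly V E x = (\<Sum>A\<in>independent_sets V E. x ^ card A)"

text \<open>The hypergraph H_{\<bullet>G}: new vertex None, edges {u,v,w} for uv in E.\<close>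

definition cone_hypergraph :: "'a set \<Rightarrow> 'a set set \<Rightarrow> 'a option hypergraph" where
  "cone_hypergraph V E = (insert None (Some ` V), {insert None (Some ` e) | e. e \<in> E})"

end

theory Submission
  imports Defs
begin

text \<open>Fix the colour c of the apex w.  An edge \<open>{u, v, w}\<close> is monochromatic iff u and v
  both get colour c, so the proper colourings with apex colour c are the colourings of G
  whose c-colour class A is independent; for a given A there are \<open>(\<lambda> - 1)^(n - |A|)\<close> of
  them.  Summing over c and A gives the identity at every natural \<open>\<lambda>\<close>, and two
  polynomials agreeing on all naturals are equal.\<close>

definition colourings_without_mono_edge ::
    "'a set \<Rightarrow> 'a set set \<Rightarrow> nat set \<Rightarrow> nat \<Rightarrow> ('a \<Rightarrow> nat) set" where
  "colourings_without_mono_edge V E S c = {\<psi> \<in> V \<rightarrow>\<^sub>E S. \<forall>e\<in>E. \<exists>v\<in>e. \<psi> v \<noteq> c}"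

lemma finite_colourings_without_mono_edge:
  assumes "finite V" "finite S"
  shows "finite (colourings_without_mono_edge V E S c)"
proof (rule finite_subset)
  show "colourings_without_mono_edge V E S c \<subseteq> V \<rightarrow>\<^sub>E S"
    by (auto simp: colourings_without_mono_edge_def)
  show "finite (V \<rightarrow>\<^sub>E S)"
    using assms by (simp add: finite_PiE)
qed

lemma card_insert_gt_1_iff:
  assumes "finite B"
  shows "1 < card (insert y B) \<longleftrightarrow> (\<exists>b\<in>B. b \<noteq> y)"
  using card_le_Suc0_iff_eq[of "insert y B"] assms by (auto simp flip: not_le)

lemma weak_proper_colourings_cone_hypergraph:
  assumes "\<forall>e\<in>E. finite e"
  shows "weak_proper_colourings (cone_hypergraph V E) k =
    {\<phi> \<in> insert None (Some ` V) \<rightarrow>\<^sub>E {1..k}. \<forall>e\<in>E. \<exists>v\<in>e. \<phi> (Some v) \<noteq> \<phi> None}"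
proof -
  have "1 < card (\<phi> ` insert None (Some ` e)) \<longleftrightarrow> (\<exists>v\<in>e. \<phi> (Some v) \<noteq> \<phi> None)"
    if "e \<in> E" for e and \<phi> :: "'a option \<Rightarrow> nat"
    using assms that by (subst image_insert, subst card_insert_gt_1_iff) auto
  moreover have "(\<forall>e\<in>snd (cone_hypergraph V E). P e) \<longleftrightarrow> (\<forall>e\<in>E. P (insert None (Some ` e)))"
    for P :: "'a option set \<Rightarrow> bool"
    by (auto simp: cone_hypergraph_def)
  ultimately show ?thesis
    by (simp add: weak_proper_colourings_def cone_hypergraph_def del: image_insert)
qed

lemma bij_betw_split_apex:
  "bij_betw (\<lambda>\<phi>. (\<phi> None, \<phi> \<circ> Some)) (insert None (Some ` V) \<rightarrow>\<^sub>E S) (S \<times> (V \<rightarrow>\<^sub>E S))"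
proof (rule bij_betw_byWitness[where f' = "\<lambda>(c, \<psi>). case_option c \<psi>"])
  show "\<forall>\<phi>\<in>insert None (Some ` V) \<rightarrow>\<^sub>E S. (\<lambda>(c, \<psi>). case_option c \<psi>) (\<phi> None, \<phi> \<circ> Some) = \<phi>"
    by (auto split: option.split)
  show "(\<lambda>\<phi>. (\<phi> None, \<phi> \<circ> Some)) ` (insert None (Some ` V) \<rightarrow>\<^sub>E S) \<subseteq> S \<times> (V \<rightarrow>\<^sub>E S)"
    by (auto simp: PiE_iff extensional_def)
  show "(\<lambda>(c, \<psi>). case_option c \<psi>) ` (S \<times> (V \<rightarrow>\<^sub>E S)) \<subseteq> insert None (Some ` V) \<rightarrow>\<^sub>E S"
    by (fastforce simp: PiE_iff extensional_def split: option.splits)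
qed auto

lemma num_colourings_cone_hypergraph_apex_sum:
  assumes "simple_graph V E"
  shows "num_colourings (cone_hypergraph V E) k =
    (\<Sum>c\<in>{1..k}. card (colourings_without_mono_edge V E {1..k} c))"
proof -
  have "finite V" and "\<forall>e\<in>E. finite e"
    using assms by (auto simp: simple_graph_def intro: finite_subset)
  have "bij_betw (\<lambda>\<phi>. (\<phi> None, \<phi> \<circ> Some))
      {\<phi> \<in> insert None (Some ` V) \<rightarrow>\<^sub>E {1..k}. \<forall>e\<in>E. \<exists>v\<in>e. \<phi> (Some v) \<noteq> \<phi> None}
      {y \<in> {1..k} \<times> (V \<rightarrow>\<^sub>E {1..k}). \<forall>e\<in>E. \<exists>v\<in>e. snd y v \<noteq> fst y}"
    by (rule bij_betw_Collect[OF bij_betw_split_apex]) simp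
  also have "{\<phi> \<in> insert None (Some ` V) \<rightarrow>\<^sub>E {1..k}. \<forall>e\<in>E. \<exists>v\<in>e. \<phi> (Some v) \<noteq> \<phi> None}
      = weak_proper_colourings (cone_hypergraph V E) k"
    using \<open>\<forall>e\<in>E. finite e\<close> by (rule weak_proper_colourings_cone_hypergraph[symmetric])
  also have "{y \<in> {1..k} \<times> (V \<rightarrow>\<^sub>E {1..k}). \<forall>e\<in>E. \<exists>v\<in>e. snd y v \<noteq> fst y}
      = (SIGMA c:{1..k}. colourings_without_mono_edge V E {1..k} c)"
    by (auto simp: colourings_without_mono_edge_def)
  finally have "num_colourings (cone_hypergraph V E) k
      = card (SIGMA c:{1..k}. colourings_without_mono_edge V E {1..k} c)"
    unfolding num_colourings_def by (rule bij_betw_same_card)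
  also have "\<dots> = (\<Sum>c\<in>{1..k}. card (colourings_without_mono_edge V E {1..k} c))"
    using \<open>finite V\<close> by (simp add: finite_colourings_without_mono_edge)
  finally show ?thesis .
qed

lemma card_PiE_colour_class:
  assumes "A \<subseteq> V" "finite V" "c \<in> S" "finite S"
  shows "card {\<psi> \<in> V \<rightarrow>\<^sub>E S. {v\<in>V. \<psi> v = c} = A} = (card S - 1) ^ (card V - card A)"
proof -
  have "{\<psi> \<in> V \<rightarrow>\<^sub>E S. {v\<in>V. \<psi> v = c} = A} = (\<Pi>\<^sub>E v\<in>V. if v \<in> A then {c} else S - {c})"
    using assms(1,3) by (auto simp: PiE_iff extensional_def split: if_splits)
  then have "card {\<psi> \<in> V \<rightarrow>\<^sub>E S. {v\<in>V. \<psi> v = c} = A}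
      = (\<Prod>v\<in>V. card (if v \<in> A then {c} else S - {c}))"
    using assms(2) by (simp add: card_PiE)
  also have "\<dots> = (\<Prod>v\<in>V. if v \<in> A then 1 else card S - 1)"
    using assms(3,4) by (intro prod.cong) (simp_all add: card_Diff_singleton)
  also have "\<dots> = (card S - 1) ^ card (V - A)"
    using assms(2) by (simp add: prod.If_cases Diff_eq)
  also have "\<dots> = (card S - 1) ^ (card V - card A)"
    using assms(1,2) by (simp add: card_Diff_subset finite_subset)
  finally show ?thesis .
qed

lemma no_mono_edge_iff_colour_class_independent:
  assumes "simple_graph V E"
  shows "(\<forall>e\<in>E. \<exists>v\<in>e. \<psi> v \<noteq> c) \<longleftrightarrow> {v\<in>V. \<psi> v = c} \<in> independent_sets V E"
proof -
  have "e \<subseteq> V \<and> (\<exists>u v. e = {u, v})" if "e \<in> E" for e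
    using assms that unfolding simple_graph_def by (metis card_2_iff)
  then show ?thesis
    unfolding independent_sets_def by fastforce
qed

lemma card_colourings_without_mono_edge:
  assumes "simple_graph V E" "c \<in> S" "finite S"
  shows "card (colourings_without_mono_edge V E S c)
    = (\<Sum>A\<in>independent_sets V E. (card S - 1) ^ (card V - card A))"
proof -
  have "finite V" using assms(1) by (simp add: simple_graph_def)
  define C where "C A = {\<psi> \<in> V \<rightarrow>\<^sub>E S. {v\<in>V. \<psi> v = c} = A}" for A
  have "colourings_without_mono_edge V E S c = (\<Union>A\<in>independent_sets V E. C A)"
    by (auto simp: colourings_without_mono_edge_def C_def no_mono_edge_iff_colour_class_independent[OF assms(1)])
  moreover have "independent_sets V E \<subseteq> Pow V"
    by (auto simp: independent_sets_def)
  then have "finite (independent_sets V E)"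
    using \<open>finite V\<close> by (meson finite_Pow_iff finite_subset)
  moreover have "finite (C A)" for A
  proof (rule finite_subset)
    show "C A \<subseteq> V \<rightarrow>\<^sub>E S" by (auto simp: C_def)
    show "finite (V \<rightarrow>\<^sub>E S)" using \<open>finite V\<close> assms(3) by (simp add: finite_PiE)
  qed
  ultimately have "card (colourings_without_mono_edge V E S c) = (\<Sum>A\<in>independent_sets V E. card (C A))"
    by (auto simp: C_def intro: card_UN_disjoint)
  also have "\<dots> = (\<Sum>A\<in>independent_sets V E. (card S - 1) ^ (card V - card A))"
    using \<open>finite V\<close> assms(2,3)
    by (intro sum.cong refl) (auto simp: C_def independent_sets_def card_PiE_colour_class)
  finally show ?thesis .
qed

lemma num_colourings_cone_hypergraph:
  assumes "simple_graph V E"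
  shows "num_colourings (cone_hypergraph V E) k =
    k * (\<Sum>A\<in>independent_sets V E. (k - 1) ^ (card V - card A))"
  using assms by (simp add: num_colourings_cone_hypergraph_apex_sum card_colourings_without_mono_edge)

lemma poly_eqI_of_nat:
  fixes p q :: "'a::{idom, ring_char_0} poly"
  assumes "\<And>k. poly p (of_nat k) = poly q (of_nat k)"
  shows "p = q"
proof (rule ccontr)
  assume "p \<noteq> q"
  then have "finite {x. poly (p - q) x = 0}"
    by (intro poly_roots_finite) simp
  moreover have "range of_nat \<subseteq> {x. poly (p - q) x = 0}"
    using assms by auto
  ultimately have "finite (range (of_nat :: nat \<Rightarrow> 'a))"
    by (rule finite_subset[rotated])
  then show False
    using range_inj_infinite[OF inj_of_nat] by blast
qed

lemma chrom_poly_eqI: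
  assumes "\<And>k. poly p (of_nat k) = of_nat (num_colourings H k)"
  shows "chrom_poly H = p"
  unfolding chrom_poly_def
proof (rule the_equality)
  show "\<forall>k. poly p (of_nat k) = of_nat (num_colourings H k)"
    using assms by blast
  fix q :: "complex poly"
  assume "\<forall>k. poly q (of_nat k) = of_nat (num_colourings H k)"
  then show "q = p"
    using assms by (intro poly_eqI_of_nat) simp
qed

lemma chrom_poly_cone_hypergraph:
  assumes "simple_graph V E"
  shows "chrom_poly (cone_hypergraph V E) =
    [:0, 1:] * (\<Sum>A\<in>independent_sets V E. [:-1, 1:] ^ (card V - card A))"
proof (rule chrom_poly_eqI)
  fix k
  have "of_nat (num_colourings (cone_hypergraph V E) k)
      = (of_nat k :: complex) * (\<Sum>A\<in>independent_sets V E. of_nat (k - 1) ^ (card V - card A))"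
    by (simp add: num_colourings_cone_hypergraph[OF assms])
  also have "\<dots> = of_nat k * (\<Sum>A\<in>independent_sets V E. (of_nat k - 1) ^ (card V - card A))"
    by (cases "k = 0") (simp_all add: of_nat_diff)
  also have "\<dots> = poly ([:0, 1:] * (\<Sum>A\<in>independent_sets V E. [:-1, 1:] ^ (card V - card A))) (of_nat k)"
    by (simp add: poly_sum)
  finally show "poly ([:0, 1:] * (\<Sum>A\<in>independent_sets V E. [:-1, 1:] ^ (card V - card A))) (of_nat k)
      = (of_nat (num_colourings (cone_hypergraph V E) k) :: complex)"
    by (rule sym)
qed

theorem theorem1:
  fixes V :: "'a set" and E :: "'a set set" and n :: nat
  assumes "simple_graph V E" and "card V = n"
  shows "\<forall>z::complex. z \<noteq> 1 \<longrightarrow>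
           poly (chrom_poly (cone_hypergraph V E)) z
             = z * (z - 1) ^ n * indep_poly V E (1 / (z - 1))"
proof (intro allI impI)
  fix z :: complex
  assume "z \<noteq> 1"
  have "finite V" using assms(1) by (simp add: simple_graph_def)
  have "(z - 1) ^ (n - card A) = (z - 1) ^ n * (1 / (z - 1)) ^ card A"
    if "A \<in> independent_sets V E" for A
  proof -
    have "card A \<le> n"
      using that \<open>finite V\<close> assms(2) by (auto simp: independent_sets_def intro: card_mono)
    with \<open>z \<noteq> 1\<close> show ?thesis
      by (simp add: power_diff power_one_over divide_inverse power_inverse)
  qed
  then have "(\<Sum>A\<in>independent_sets V E. (z - 1) ^ (n - card A))
      = (z - 1) ^ n * indep_poly V E (1 / (z - 1))"
    by (simp add: indep_poly_def sum_distrib_left)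
  then show "poly (chrom_poly (cone_hypergraph V E)) z
      = z * (z - 1) ^ n * indep_poly V E (1 / (z - 1))"
    by (simp add: chrom_poly_cone_hypergraph[OF assms(1)] assms(2) poly_sum mult.assoc)
qed

end
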